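(* Fix an input $X=[x_1,\dots,x_T]$ with $\|x_t\|_2\le R_x$ and an initial state $h_0\in[-1,1]^{\hat D}$. Let $\theta=(W,U)$ and $\theta+\delta=(W+\delta_W,U+\delta_U)$, and let $h_T=h_T(\theta)$, $h_T'=h_T(\theta+\delta)$ be the FastRNN final states on $X$ with $\beta=1-\alpha$. Then $$\|h_T'-h_T\|_2\le \alpha\big(\sqrt{\hat D}\|\delta_U\|_2+R_x\|\delta_W\|_2\big)\sum_{j=0}^{T-1}(\alpha\|U\|_2+\beta)^j,$$ and if moreover $\alpha\le \frac{1}{T\,|\|U\|_2-1|}$, then $$\|h_T'-h_T\|_2\le 2\alpha T\big(\sqrt{\hat D}\|\delta_U\|_2+R_x\|\delta_W\|_2\big).$$
   Context: FastRNN recursion: $h_t=\alpha\,\sigma(Wx_t+Uh_{t-1})+\beta h_{t-1}$ with $W\in\mathbb R^{\hat D\times D}$, $U\in\mathbb R^{\hat D\times\hat D}$, $0\le\alpha,\beta\le1$, and $\sigma$ a coordinatewise $1$-Lipschitz nonlinearity taking values in $[-1,1]$. Norms on matrices are spectral norms. *)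

theory Defs
  imports "HOL-Analysis.Analysis"
begin

definition spec_norm :: "real^'n^'m \<Rightarrow> real" where
  "spec_norm A = onorm (\<lambda>v. A *v v)"

fun fastrnn :: "(real \<Rightarrow> real) \<Rightarrow> real \<Rightarrow> real \<Rightarrow> real^'d^'h \<Rightarrow> real^'h^'h
    \<Rightarrow> (nat \<Rightarrow> real^'d) \<Rightarrow> real^'h \<Rightarrow> nat \<Rightarrow> real^'h" where
  "fastrnn \<sigma> \<alpha> \<beta> W U x h0 0 = h0"
| "fastrnn \<sigma> \<alpha> \<beta> W U x h0 (Suc t) =
     \<alpha> *\<^sub>R (\<chi> i. \<sigma> ((W *v x (Suc t) + U *v fastrnn \<sigma> \<alpha> \<beta> W U x h0 t) $ i))
     + \<beta> *\<^sub>R fastrnn \<sigma> \<alpha> \<beta> W U x h0 t"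

end

theory Submission
  imports Defs
begin

text \<open>Since \<sigma> is 1-Lipschitz and every state stays in the box [-1,1]^D (so has norm at most
  sqrt D), one step of the perturbed recursion adds at most
  \<alpha>(sqrt D \<parallel>\<delta>U\<parallel> + Rx \<parallel>\<delta>W\<parallel>) to the error and multiplies the previous error by at most
  q = \<alpha>\<parallel>U\<parallel> + \<beta>.  Unrolling the recurrence gives the geometric sum.  Under the extra
  hypothesis, q \<le> 1 + c with cT \<le> 1, and (1 + c)^j \<le> exp (cj) \<le> 1 + 2cj, so the
  sum is at most T + cT^2 \<le> 2T.\<close>

lemma exp_le_one_plus_twice:
  fixes y :: real
  assumes "0 \<le> y" "y \<le> 1"
  shows "exp y \<le> 1 + 2 * y"
proof -
  have "exp ((1 - y) *\<^sub>R 0 + y *\<^sub>R 1) \<le> (1 - y) * exp 0 + y * exp 1"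
    using assms by (intro convex_onD[OF exp_convex]) auto
  moreover have "y * exp 1 \<le> y * 3"
    using exp_le assms by (intro mult_left_mono) auto
  ultimately show ?thesis by simp
qed

lemma power_one_plus_le_linear:
  fixes c :: real
  assumes "0 \<le> c" "c * real j \<le> 1"
  shows "(1 + c) ^ j \<le> 1 + 2 * c * real j"
proof -
  have "(1 + c) ^ j \<le> exp c ^ j"
    using assms by (intro power_mono) (auto simp: exp_ge_add_one_self)
  also have "\<dots> = exp (c * real j)"
    by (simp add: exp_of_nat2_mult)
  also have "\<dots> \<le> 1 + 2 * (c * real j)"
    using assms by (intro exp_le_one_plus_twice) auto
  finally show ?thesis by simp
qed

lemma sum_power_le_twice_card:
  fixes c q :: real
  assumes "0 \<le> c" "c * real T \<le> 1" "0 \<le> q" "q \<le> 1 + c"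
  shows "(\<Sum>j<T. q ^ j) \<le> 2 * real T"
proof -
  have gauss: "2 * (\<Sum>j<n. real j) \<le> real n * real n" for n
    by (induction n) (auto simp: algebra_simps)
  have "(\<Sum>j<T. q ^ j) \<le> (\<Sum>j<T. 1 + 2 * c * real j)"
  proof (rule sum_mono)
    fix j assume "j \<in> {..<T}"
    then have "c * real j \<le> c * real T"
      using assms(1) by (intro mult_left_mono) auto
    then have "(1 + c) ^ j \<le> 1 + 2 * c * real j"
      using assms by (intro power_one_plus_le_linear) auto
    moreover have "q ^ j \<le> (1 + c) ^ j"
      using assms by (intro power_mono) auto
    ultimately show "q ^ j \<le> 1 + 2 * c * real j" by linarith
  qed
  also have "\<dots> = real T + c * (2 * (\<Sum>j<T. real j))"
    by (simp add: sum.distrib sum_distrib_left algebra_simps)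
  also have "\<dots> \<le> real T + (c * real T) * real T"
    using assms gauss[of T] by (simp add: mult_left_mono mult.assoc)
  also have "\<dots> \<le> 2 * real T"
    using assms mult_right_mono[OF assms(2), of "real T"] by simp
  finally show ?thesis .
qed

lemma linear_recurrence_le_geometric_sum:
  fixes e :: "nat \<Rightarrow> real"
  assumes "e 0 = 0" "0 \<le> q"
    and step: "\<And>t. t < T \<Longrightarrow> e (Suc t) \<le> a + q * e t"
    and "t \<le> T"
  shows "e t \<le> a * (\<Sum>j<t. q ^ j)"
  using \<open>t \<le> T\<close>
proof (induction t)
  case 0 then show ?case using assms(1) by simp
next
  case (Suc t)
  have "e (Suc t) \<le> a + q * e t"
    using step Suc.prems by simp
  also have "\<dots> \<le> a + q * (a * (\<Sum>j<t. q ^ j))"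
    using Suc assms(2) by (intro add_left_mono mult_left_mono) auto
  also have "\<dots> = a * (\<Sum>j<Suc t. q ^ j)"
    by (simp only: sum.lessThan_Suc_shift) (simp add: sum_distrib_left[symmetric] algebra_simps)
  finally show ?case .
qed

lemma norm_map_vector_lipschitz:
  fixes a b :: "real^'n"
  assumes "\<And>s t. \<bar>\<sigma> s - \<sigma> t\<bar> \<le> \<bar>s - t\<bar>"
  shows "norm ((\<chi> i. \<sigma> (a $ i)) - (\<chi> i. \<sigma> (b $ i))) \<le> norm (a - b)"
  unfolding norm_vec_def by (intro L2_set_mono) (auto simp: assms)

lemma norm_le_sqrt_card_if_box:
  fixes v :: "real^'n"
  assumes "\<And>i. \<bar>v $ i\<bar> \<le> 1"
  shows "norm v \<le> sqrt (real CARD('n))"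
proof -
  have "norm v = sqrt (\<Sum>i\<in>UNIV. (v $ i)\<^sup>2)"
    by (simp add: norm_vec_def L2_set_def)
  also have "\<dots> \<le> sqrt (\<Sum>i\<in>(UNIV::'n set). 1)"
    using assms by (intro real_sqrt_le_mono sum_mono) (simp add: abs_square_le_1)
  finally show ?thesis by simp
qed

lemma norm_matrix_vector_mult_le: "norm (A *v v) \<le> spec_norm A * norm v"
  unfolding spec_norm_def by (rule onorm[OF matrix_vector_mul_bounded_linear])

lemma spec_norm_nonneg: "0 \<le> spec_norm A"
  unfolding spec_norm_def by (rule onorm_pos_le[OF matrix_vector_mul_bounded_linear])

lemma fastrnn_in_box:
  assumes "\<And>s. \<bar>\<sigma> s\<bar> \<le> 1" "0 \<le> \<alpha>" "0 \<le> \<beta>" "\<alpha> + \<beta> \<le> 1" "\<And>i. \<bar>h0 $ i\<bar> \<le> 1"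
  shows "\<bar>fastrnn \<sigma> \<alpha> \<beta> W U x h0 t $ i\<bar> \<le> 1"
proof (induction t arbitrary: i)
  case 0 then show ?case using assms by simp
next
  case (Suc t)
  let ?h = "fastrnn \<sigma> \<alpha> \<beta> W U x h0 t"
  let ?s = "\<sigma> ((W *v x (Suc t) + U *v ?h) $ i)"
  have "\<bar>\<alpha> * ?s + \<beta> * ?h $ i\<bar> \<le> \<alpha> * \<bar>?s\<bar> + \<beta> * \<bar>?h $ i\<bar>"
    using assms by (simp add: abs_mult order_trans[OF abs_triangle_ineq])
  also have "\<dots> \<le> \<alpha> * 1 + \<beta> * 1"
    using assms Suc by (intro add_mono mult_left_mono) auto
  finally show ?case using assms by simp
qed

lemma fastrnn_perturbation_step:
  fixes W dW :: "real^'d^'h" and U dU :: "real^'h^'h" and \<sigma> \<alpha> \<beta> x h0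
  defines "h \<equiv> fastrnn \<sigma> \<alpha> \<beta> W U x h0"
    and "h' \<equiv> fastrnn \<sigma> \<alpha> \<beta> (W + dW) (U + dU) x h0"
  assumes sigma_lip: "\<And>s t. \<bar>\<sigma> s - \<sigma> t\<bar> \<le> \<bar>s - t\<bar>"
    and sigma_bd: "\<And>s. \<bar>\<sigma> s\<bar> \<le> 1"
    and coeffs: "0 \<le> \<alpha>" "0 \<le> \<beta>" "\<alpha> + \<beta> \<le> 1"
    and h0_box: "\<And>i. \<bar>h0 $ i\<bar> \<le> 1"
  shows "norm (h' (Suc t) - h (Suc t))
    \<le> \<alpha> * (sqrt (real CARD('h)) * spec_norm dU + norm (x (Suc t)) * spec_norm dW)
       + (\<alpha> * spec_norm U + \<beta>) * norm (h' t - h t)"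
proof -
  let ?a' = "(W + dW) *v x (Suc t) + (U + dU) *v h' t"
  let ?a = "W *v x (Suc t) + U *v h t"
  let ?e = "norm (h' t - h t)"
  have diff: "h' (Suc t) - h (Suc t)
      = \<alpha> *\<^sub>R ((\<chi> i. \<sigma> (?a' $ i)) - (\<chi> i. \<sigma> (?a $ i))) + \<beta> *\<^sub>R (h' t - h t)"
    unfolding h_def h'_def by (simp add: algebra_simps)
  have preact_diff: "?a' - ?a = dW *v x (Suc t) + dU *v h' t + U *v (h' t - h t)"
    by (simp add: matrix_vector_mult_add_rdistrib matrix_vector_right_distrib
        matrix_vector_mult_diff_distrib algebra_simps)
  have "norm (h' t) \<le> sqrt (real CARD('h))"
    unfolding h'_def by (intro norm_le_sqrt_card_if_box fastrnn_in_box sigma_bd coeffs h0_box)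
  then have "norm (dU *v h' t) \<le> spec_norm dU * sqrt (real CARD('h))"
    by (meson norm_matrix_vector_mult_le order_trans mult_left_mono spec_norm_nonneg)
  then have preact: "norm (?a' - ?a)
      \<le> sqrt (real CARD('h)) * spec_norm dU + norm (x (Suc t)) * spec_norm dW + spec_norm U * ?e"
    unfolding preact_diff
    using norm_triangle_ineq[of "dW *v x (Suc t) + dU *v h' t" "U *v (h' t - h t)"]
      norm_triangle_ineq[of "dW *v x (Suc t)" "dU *v h' t"]
      norm_matrix_vector_mult_le[of dW "x (Suc t)"] norm_matrix_vector_mult_le[of U "h' t - h t"]
    by (simp add: algebra_simps)
  have "norm (h' (Suc t) - h (Suc t))
      \<le> \<alpha> * norm ((\<chi> i. \<sigma> (?a' $ i)) - (\<chi> i. \<sigma> (?a $ i))) + \<beta> * ?e"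
    unfolding diff using coeffs norm_triangle_ineq by (simp add: order_trans[OF norm_triangle_ineq])
  also have "\<dots> \<le> \<alpha> * norm (?a' - ?a) + \<beta> * ?e"
    using coeffs norm_map_vector_lipschitz[OF sigma_lip] by (intro add_right_mono mult_left_mono)
  also have "\<dots> \<le> \<alpha> * (sqrt (real CARD('h)) * spec_norm dU + norm (x (Suc t)) * spec_norm dW
      + spec_norm U * ?e) + \<beta> * ?e"
    using coeffs preact by (intro add_right_mono mult_left_mono)
  finally show ?thesis by (simp add: algebra_simps)
qed

lemma fastrnn_perturbation_le_geometric_sum:
  fixes W dW :: "real^'d^'h" and U dU :: "real^'h^'h"
  assumes sigma_lip: "\<And>s t. \<bar>\<sigma> s - \<sigma> t\<bar> \<le> \<bar>s - t\<bar>"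
    and sigma_bd: "\<And>s. \<bar>\<sigma> s\<bar> \<le> 1"
    and coeffs: "0 \<le> \<alpha>" "0 \<le> \<beta>" "\<alpha> + \<beta> \<le> 1"
    and x_bd: "\<And>t. 1 \<le> t \<Longrightarrow> t \<le> T \<Longrightarrow> norm (x t) \<le> Rx"
    and h0_box: "\<And>i. \<bar>h0 $ i\<bar> \<le> 1"
  shows "norm (fastrnn \<sigma> \<alpha> \<beta> (W + dW) (U + dU) x h0 T - fastrnn \<sigma> \<alpha> \<beta> W U x h0 T)
    \<le> \<alpha> * (sqrt (real CARD('h)) * spec_norm dU + Rx * spec_norm dW)
       * (\<Sum>j<T. (\<alpha> * spec_norm U + \<beta>) ^ j)"
proof -
  define e where "e t = norm (fastrnn \<sigma> \<alpha> \<beta> (W + dW) (U + dU) x h0 t - fastrnn \<sigma> \<alpha> \<beta> W U x h0 t)" for t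
  define K where "K = sqrt (real CARD('h)) * spec_norm dU + Rx * spec_norm dW"
  define q where "q = \<alpha> * spec_norm U + \<beta>"
  have q_nonneg: "0 \<le> q"
    unfolding q_def using coeffs spec_norm_nonneg[of U] by simp
  have error_step: "e (Suc t) \<le> \<alpha> * K + q * e t" if "t < T" for t
  proof -
    have "norm (x (Suc t)) * spec_norm dW \<le> Rx * spec_norm dW"
      using x_bd[of "Suc t"] that by (intro mult_right_mono spec_norm_nonneg) auto
    then have "\<alpha> * (sqrt (real CARD('h)) * spec_norm dU + norm (x (Suc t)) * spec_norm dW) \<le> \<alpha> * K"
      unfolding K_def using coeffs by (intro mult_left_mono) auto
    moreover have "e (Suc t) \<le> \<alpha> * (sqrt (real CARD('h)) * spec_norm dU + norm (x (Suc t)) * spec_norm dW)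
        + q * e t"
      unfolding e_def q_def using coeffs h0_box
      by (intro fastrnn_perturbation_step[OF sigma_lip sigma_bd]) auto
    ultimately show ?thesis by linarith
  qed
  have "e 0 = 0" by (simp add: e_def)
  from linear_recurrence_le_geometric_sum[OF this q_nonneg error_step order_refl]
  show ?thesis unfolding e_def K_def q_def .
qed

theorem mainTheorem4:
  fixes \<sigma> :: "real \<Rightarrow> real" and \<alpha> \<beta> Rx :: real and T :: nat
    and W dW :: "real^'d^'h" and U dU :: "real^'h^'h"
    and x :: "nat \<Rightarrow> real^'d" and h0 :: "real^'h"
  assumes sigma_lip: "\<And>a b. \<bar>\<sigma> a - \<sigma> b\<bar> \<le> \<bar>a - b\<bar>"
    and sigma_bd: "\<And>a. \<bar>\<sigma> a\<bar> \<le> 1"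
    and alpha: "0 \<le> \<alpha>" "\<alpha> \<le> 1"
    and beta: "\<beta> = 1 - \<alpha>"
    and x_bd: "\<And>t. 1 \<le> t \<Longrightarrow> t \<le> T \<Longrightarrow> norm (x t) \<le> Rx"
    and h0_box: "\<And>i. \<bar>h0 $ i\<bar> \<le> 1"
  shows "norm (fastrnn \<sigma> \<alpha> \<beta> (W + dW) (U + dU) x h0 T - fastrnn \<sigma> \<alpha> \<beta> W U x h0 T)
           \<le> \<alpha> * (sqrt (real CARD('h)) * spec_norm dU + Rx * spec_norm dW)
               * (\<Sum>j<T. (\<alpha> * spec_norm U + \<beta>) ^ j)
       \<and> (\<alpha> * real T * \<bar>spec_norm U - 1\<bar> \<le> 1 \<longrightarrow>
          norm (fastrnn \<sigma> \<alpha> \<beta> (W + dW) (U + dU) x h0 T - fastrnn \<sigma> \<alpha> \<beta> W U x h0 T)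
           \<le> 2 * \<alpha> * real T * (sqrt (real CARD('h)) * spec_norm dU + Rx * spec_norm dW))"
proof -
  let ?K = "sqrt (real CARD('h)) * spec_norm dU + Rx * spec_norm dW"
  let ?q = "\<alpha> * spec_norm U + \<beta>"
  have geometric: "norm (fastrnn \<sigma> \<alpha> \<beta> (W + dW) (U + dU) x h0 T - fastrnn \<sigma> \<alpha> \<beta> W U x h0 T)
      \<le> \<alpha> * ?K * (\<Sum>j<T. ?q ^ j)"
    using alpha beta by (intro fastrnn_perturbation_le_geometric_sum sigma_lip sigma_bd x_bd h0_box) auto
  moreover have "\<alpha> * ?K * (\<Sum>j<T. ?q ^ j) \<le> 2 * \<alpha> * real T * ?K"
    if small: "\<alpha> * real T * \<bar>spec_norm U - 1\<bar> \<le> 1"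
  proof (cases "T = 0")
    case False
    then have "0 \<le> Rx" using x_bd[of T] by (simp add: order_trans[OF norm_ge_zero])
    then have "0 \<le> \<alpha> * ?K"
      using alpha by (intro mult_nonneg_nonneg add_nonneg_nonneg) (auto simp: spec_norm_nonneg)
    moreover have "?q \<le> 1 + \<alpha> * \<bar>spec_norm U - 1\<bar>"
      using mult_left_mono[OF abs_ge_self alpha(1), of "spec_norm U - 1"]
      unfolding beta by (simp add: algebra_simps)
    then have "(\<Sum>j<T. ?q ^ j) \<le> 2 * real T"
      using small alpha beta spec_norm_nonneg[of U]
      by (intro sum_power_le_twice_card[of "\<alpha> * \<bar>spec_norm U - 1\<bar>"]) (auto simp: algebra_simps)
    ultimately have "\<alpha> * ?K * (\<Sum>j<T. ?q ^ j) \<le> \<alpha> * ?K * (2 * real T)"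
      by (rule mult_left_mono[rotated])
    then show ?thesis by (simp add: algebra_simps)
  qed simp
  ultimately show ?thesis by (meson order_trans)
qed

end
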